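(* Consider the $L$-user Broadcast Malayter-Chance-Love (BMCL) scheme described in the context, with perfect feedback ($\sigma_f^2=0$) and broadcast SNR $P/\sigma_b^2$. Its maximum (symmetric) sum rate is $$C_{sum}\left(\frac{P}{\sigma_b^2}\right)=-L\log_2(\beta_\infty),$$ where $\beta_\infty\in(0,1)$ is the value of $\beta$ satisfying $$\frac{(1-\beta^{2L})^2}{L^2\beta^{2L}(1-\beta^2)}=\frac{P}{\sigma_b^2 L}.$$
   Context: Channel: real $L$-user AWGN broadcast channel with feedback. At channel use $t$ the transmitter sends $x[t]\in\mathbb{R}$, receiver $\ell$ observes $y_\ell[t]=x[t]+n^b_\ell[t]$ with $n^b_\ell[t]\sim\mathcal{N}(0,\sigma_b^2)$ i.i.d., and feeds back $z_\ell[t]=y_\ell[t]+n^f_\ell[t]$, $n^f_\ell[t]\sim\mathcal{N}(0,\sigma_f^2)$ i.i.d.; perfect feedback means $\sigma_f^2=0$. Average power constraint $\frac1N\mathbb{E}\sum_{t=1}^N x[t]^2\le P$. Each user $\ell$ has a message of $K_\ell=NR_\ell$ bits, all users have equal rate $R_\ell$, and the sum rate is $R_{sum}=LR_\ell$. BMCL scheme ($L$ a power of $2$, blocklength $N$, $\hat N=N-L$, power sharing parameter $\gamma\in(0,1)$): user $\ell$'s message is mapped to a uniformly distributed PAM symbol $\Theta_\ell$ with $\mathbb{E}|\Theta_\ell|^2=(1-\gamma)NP/L$; in the first $L$ channel uses $x[t]=\Theta_t$, and the remaining $\hat N$ uses carry linear feedback-based noise cancellation. For $\beta\in(0,1)$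 the base encoding matrix $\mathbf{F}\in\mathbb{R}^{(\hat N+1)\times(\hat N+1)}$ has entries $\mathbf{F}[t,m]=0$ for $t\le m$ and $\mathbf{F}[t,m]=\frac{-(1-\beta^{2L})}{L\beta}\beta^{L\lfloor (t-m-1)/L\rfloor-\mathrm{mod}(t-m-1,L)}$ for $t>m$. For user $\ell$, $\mathbf{C}_\ell$ is the $(\hat N+1)\times(\hat N+1)$ diagonal matrix whose $i$-th diagonal entry is the entry in position $\mathrm{mod}(i,L)$ (positions counted cyclically) of the $\ell$-th row $\mathbf{c}_\ell$ of an $L\times L$ Hadamard matrix; user $\ell$'s encoding matrix is $\mathbf{F}_\ell=\mathbf{C}_\ell\mathbf{F}\mathbf{C}_\ell^T$. Receiver $\ell$ sees $\mathbf{y}_\ell=\mathbf{e}_1\Theta_\ell+(\mathbf{I}+\mathbf{F}_\ell)\mathbf{n}^b_\ell+\mathbf{F}_\ell\mathbf{n}^f_\ell+\sum_{\ell'\ne\ell}\mathbf{F}_{\ell'}(\mathbf{n}^b_{\ell'}+\mathbf{n}^f_{\ell'})$ and estimates $\hat\Theta_\ell=\mathbf{q}^T\mathbf{C}_\ell\mathbf{y}_\ell$ with the (asymptotic) combiner $\mathbf{q}=[1,\beta,\beta^2,\dots,\beta^{\hat N}]^T$. For fixed $\gamma$, $\beta=\beta(\gamma)\in(0,1)$ is chosen to satisfy $\frac{(1-\beta^{2L})^2}{L^2\beta^{2L}(1-\beta^2)}=\frac{P\gamma}{L(\sigma_b^2+\sigma_f^2)}$. The output SNR of user $\ell$ is $$SNR_\ell(\gamma)=\frac{\frac1L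 PN(1-\gamma)}{\sigma_b^2\|\mathbf{q}^T(\mathbf{I}+\mathbf{F})\|_2^2+(\sigma_b^2+\sigma_f^2)\sum_{i\ne\ell}\|\mathbf{q}^T\mathbf{C}_\ell\mathbf{C}_i\mathbf{F}\|_2^2+\sigma_f^2\|\mathbf{q}^T\mathbf{F}\|_2^2},$$ and its average block error rate is $\mathbb{P}_{e,\ell}=2\left(1-\frac{1}{2^{2NR_\ell}}\right)Q\left(\sqrt{\frac{6}{2^{2NR_\ell}-1}SNR_\ell(\gamma)}\right)$, where $Q$ is the standard Gaussian tail function. A per-user rate $R_\ell$ is achievable if for some $\gamma\in(0,1)$, $\mathbb{P}_{e,\ell}\to0$ as $N\to\infty$; the maximum sum rate $C_{sum}(P/\sigma_b^2)$ is the supremum of $LR_\ell$ over achievable $R_\ell$. *)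

theory Defs
  imports "HOL-Probability.Probability"
begin

definition gaussQ :: "real \<Rightarrow> real" where
  "gaussQ x = (LBINT t:{x<..}. std_normal_density t)"

text \<open>Sylvester Hadamard matrix (0-indexed rows/columns):
  entry (l, j) = (-1)^(popcount (l AND j)).\<close>
definition hadamard :: "nat \<Rightarrow> nat \<Rightarrow> real" where
  "hadamard l j = (-1) ^ card {k. bit l k \<and> bit j k}"

text \<open>Base encoding matrix F (0-indexed, t, m in {0..Nhat}).\<close>
definition Fmat :: "nat \<Rightarrow> real \<Rightarrow> nat \<Rightarrow> nat \<Rightarrow> real" where
  "Fmat L \<beta> t m =
     (if t \<le> m then 0
      else - (1 - \<beta> ^ (2 * L)) / (real L * \<beta>) *
           \<beta> powi (int L * int ((t - m - 1) div L) - int ((t - m - 1) mod L)))"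

text \<open>Diagonal entry i (0-indexed) of C_l: entry of row l of the Hadamard matrix
  at cyclic position i mod L.\<close>
definition Cdiag :: "nat \<Rightarrow> nat \<Rightarrow> nat \<Rightarrow> real" where
  "Cdiag L l i = hadamard l (i mod L)"

definition qvec :: "real \<Rightarrow> nat \<Rightarrow> real" where
  "qvec \<beta> i = \<beta> ^ i"

definition normIF :: "nat \<Rightarrow> real \<Rightarrow> nat \<Rightarrow> real" where
  "normIF L \<beta> Nh = (\<Sum>m\<le>Nh. (\<Sum>t\<le>Nh. qvec \<beta> t * ((if t = m then 1 else 0) + Fmat L \<beta> t m))\<^sup>2)"

definition normCCF :: "nat \<Rightarrow> real \<Rightarrow> nat \<Rightarrow> nat \<Rightarrow> nat \<Rightarrow> real" where
  "normCCF L \<beta> Nh l i = (\<Sum>m\<le>Nh. (\<Sum>t\<le>Nh. qvec \<beta> t * Cdiag L l t * Cdiag L i t * Fmat L \<beta> t m)\<^sup>2)"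

definition normF :: "nat \<Rightarrow> real \<Rightarrow> nat \<Rightarrow> real" where
  "normF L \<beta> Nh = (\<Sum>m\<le>Nh. (\<Sum>t\<le>Nh. qvec \<beta> t * Fmat L \<beta> t m)\<^sup>2)"

text \<open>Output SNR of user l (0-indexed, l < L), blocklength N, Nhat = N - L.\<close>
definition SNR :: "nat \<Rightarrow> real \<Rightarrow> real \<Rightarrow> real \<Rightarrow> real \<Rightarrow> real \<Rightarrow> nat \<Rightarrow> nat \<Rightarrow> real" where
  "SNR L P sb2 sf2 \<beta> \<gamma> N l =
     (P * real N * (1 - \<gamma>) / real L) /
     (sb2 * normIF L \<beta> (N - L)
      + (sb2 + sf2) * (\<Sum>i\<in>{0..<L} - {l}. normCCF L \<beta> (N - L) l i)
      + sf2 * normF L \<beta> (N - L))"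

definition Pe :: "nat \<Rightarrow> real \<Rightarrow> real \<Rightarrow> real \<Rightarrow> real \<Rightarrow> real \<Rightarrow> nat \<Rightarrow> real \<Rightarrow> nat \<Rightarrow> real" where
  "Pe L P sb2 sf2 \<beta> \<gamma> N R l =
     2 * (1 - 1 / 2 powr (2 * real N * R)) *
     gaussQ (sqrt (6 / (2 powr (2 * real N * R) - 1) * SNR L P sb2 sf2 \<beta> \<gamma> N l))"

definition beta_eq :: "nat \<Rightarrow> real \<Rightarrow> real \<Rightarrow> real \<Rightarrow> real \<Rightarrow> real \<Rightarrow> bool" where
  "beta_eq L P sb2 sf2 \<gamma> \<beta> \<longleftrightarrow> 0 < \<beta> \<and> \<beta> < 1 \<and>
     (1 - \<beta> ^ (2 * L))\<^sup>2 / ((real L)\<^sup>2 * \<beta> ^ (2 * L) * (1 - \<beta>\<^sup>2))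
       = P * \<gamma> / (real L * (sb2 + sf2))"

definition achievable :: "nat \<Rightarrow> real \<Rightarrow> real \<Rightarrow> real \<Rightarrow> real \<Rightarrow> bool" where
  "achievable L P sb2 sf2 R \<longleftrightarrow> R \<ge> 0 \<and>
     (\<exists>\<gamma>. 0 < \<gamma> \<and> \<gamma> < 1 \<and> (\<exists>\<beta>. beta_eq L P sb2 sf2 \<gamma> \<beta> \<and>
        (\<forall>l<L. (\<lambda>N. Pe L P sb2 sf2 \<beta> \<gamma> N R l) \<longlonglongrightarrow> 0)))"

definition Csum :: "nat \<Rightarrow> real \<Rightarrow> real \<Rightarrow> real \<Rightarrow> real" where
  "Csum L P sb2 sf2 = Sup ((\<lambda>R. real L * R) ` {R. achievable L P sb2 sf2 R})"

end

theory Submission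
  imports Defs
begin

text \<open>
  With perfect feedback the SNR denominator of user \<open>l\<close> is \<open>\<sigma>\<^sub>b\<^sup>2\<close> times
  \<open>\<parallel>q\<^sup>T(I + F)\<parallel>\<^sup>2 + (\<Sum>i\<noteq>l. \<parallel>q\<^sup>T C\<^sub>l C\<^sub>i F\<parallel>\<^sup>2)\<close>. Entry \<open>m\<close> of each of these row vectors
  is at most \<open>\<beta>\<^sup>m a\<^sup>k\<close> in absolute value, where \<open>a = \<beta>\<^sup>2\<^sup>L\<close> and \<open>k = (Nh - m) div L\<close>:
  for \<open>q\<^sup>T(I + F)\<close> by an explicit block-geometric sum, for the cross terms because distinct
  Hadamard rows are orthogonal, so every full block of \<open>L\<close> consecutive terms cancels. Summing
  squares bounds the denominator by a constant times \<open>\<beta>\<^sup>2\<^sup>N\<close>, while the last entry of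
  \<open>q\<^sup>T(I + F)\<close> alone contributes \<open>\<beta>\<^sup>2\<^sup>N\<^sup>h\<close>; hence \<open>SNR\<^sub>l\<close> is of exact order \<open>N \<beta>\<^sup>-\<^sup>2\<^sup>N\<close>.

  The Q-function in the error rate is evaluated at roughly \<open>sqrt (6 SNR\<^sub>l / 2\<^sup>2\<^sup>N\<^sup>R)\<close>. At the
  rate \<open>R = - log\<^sub>2 \<beta>\<close> this argument grows like \<open>sqrt N\<close>, and the Chebyshev bound
  \<open>Q(y) \<le> 1/y\<^sup>2\<close> sends the error rate to 0; for \<open>R > - log\<^sub>2 \<beta>\<close> the argument decays
  geometrically and the error rate stays above \<open>Q(1) > 0\<close>. So the achievable rates are those
  up to \<open>- log\<^sub>2 \<beta>(\<gamma>)\<close>. The left-hand side of the equation for \<open>\<beta>\<close> is strictly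
  decreasing on \<open>(0, 1)\<close>, hence the values \<open>\<beta>(\<gamma>)\<close>, \<open>0 < \<gamma> < 1\<close>, are exactly the
  points of \<open>(\<beta>\<^sub>\<infinity>, 1)\<close>, and the supremum of \<open>- L log\<^sub>2 \<beta>(\<gamma>)\<close> is \<open>- L log\<^sub>2 \<beta>\<^sub>\<infinity>\<close>.
\<close>

section \<open>Sums over blocks of length \<open>L\<close>\<close>

lemma sum_periodic_shift:
  fixes f :: "nat \<Rightarrow> 'a::cancel_comm_monoid_add"
  assumes periodic: "\<And>k. f (k + L) = f k"
  shows "(\<Sum>k<L. f (j + k)) = (\<Sum>k<L. f k)"
proof (induction j)
  case (Suc j)
  have "f j + (\<Sum>k<L. f (Suc j + k)) = (\<Sum>k<Suc L. f (j + k))"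
    by (simp only: sum.lessThan_Suc_shift) simp
  also have "\<dots> = f j + (\<Sum>k<L. f (j + k))"
    using periodic[of j] by (simp add: add.commute)
  finally show ?case
    using Suc.IH by simp
qed simp

lemma sum_power_div_blocks:
  fixes a :: "'a::comm_semiring_1"
  assumes "0 < L"
  shows "(\<Sum>k<K. a ^ (k div L) * s k)
    = (\<Sum>m<K div L. a ^ m * (\<Sum>r<L. s (m * L + r)))
      + a ^ (K div L) * (\<Sum>r<K mod L. s (K div L * L + r))"
proof -
  let ?g = "\<lambda>k. a ^ (k div L) * s k"
  let ?q = "K div L"
  have "{..<K} = {..<?q * L} \<union> {?q * L..<K}"
    using ivl_disj_un_one(2)[OF div_times_less_eq_dividend] by simp
  then have "(\<Sum>k<K. ?g k) = (\<Sum>k<?q * L. ?g k) + (\<Sum>k\<in>{?q * L..<K}. ?g k)"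
    by (simp add: sum.union_disjoint ivl_disj_int_one(2))
  also have "(\<Sum>k<?q * L. ?g k) = (\<Sum>m<?q. \<Sum>r<L. ?g (r + m * L))"
    by (rule sum_mult_product)
  also have "\<dots> = (\<Sum>m<?q. a ^ m * (\<Sum>r<L. s (m * L + r)))"
    using assms by (simp add: sum_distrib_left add.commute)
  also have "(\<Sum>k\<in>{?q * L..<K}. ?g k) = (\<Sum>k\<in>{0 + ?q * L..<K mod L + ?q * L}. ?g k)"
    by simp
  also have "\<dots> = (\<Sum>r<K mod L. ?g (r + ?q * L))"
    by (simp only: sum.shift_bounds_nat_ivl atLeast0LessThan)
  also have "\<dots> = a ^ ?q * (\<Sum>r<K mod L. s (?q * L + r))"
  proof -
    have "r div L = 0" if "r < K mod L" for r
      using that assms by (meson div_less mod_less_divisor order.strict_trans)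
    then show ?thesis
      using assms by (simp add: sum_distrib_left add.commute)
  qed
  finally show ?thesis .
qed

lemma power_div_blocks_le:
  fixes b :: real
  assumes "0 < b" "b \<le> 1" "0 < L"
  shows "(b ^ (2 * L)) ^ (e div L) * b ^ (2 * L) \<le> b ^ (2 * e)"
proof -
  have "e < L * (e div L) + L"
    using assms(3) by (metis add_less_cancel_left div_mult_mod_eq mod_less_divisor mult.commute)
  then have "b ^ (2 * L * (e div L) + 2 * L) \<le> b ^ (2 * e)"
    using assms(1,2) by (intro power_decreasing) auto
  then show ?thesis
    by (simp add: power_add power_mult)
qed

lemma geometric_sum_le:
  fixes x :: real
  assumes "0 \<le> x" "x < 1"
  shows "(\<Sum>j\<le>n. x ^ j) \<le> 1 / (1 - x)"
  using sum_le_suminf[of "\<lambda>j. x ^ j" "{..n}"] assms by (simp add: suminf_geometric)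

section \<open>Orthogonality of Hadamard rows\<close>

lemma bit_imp_less: "bit (n::nat) k \<Longrightarrow> k < n"
proof (rule ccontr)
  assume "bit n k" "\<not> k < n"
  then have "n < 2 ^ k" using less_exp[of k] by linarith
  with \<open>bit n k\<close> show False by (simp add: bit_iff_odd)
qed

lemma hadamard_rec:
  "hadamard l j = (if odd l \<and> odd j then -1 else 1) * hadamard (l div 2) (j div 2)"
proof -
  let ?S = "{k. bit (l div 2) k \<and> bit (j div 2) k}"
  have fin: "finite ?S"
    by (rule finite_subset[of _ "{..<l div 2}"]) (auto dest: bit_imp_less)
  have "{k. bit l k \<and> bit j k} = (if odd l \<and> odd j then {0} else {}) \<union> Suc ` ?S"
  proof (rule set_eqI)
    fix k
    show "k \<in> {k. bit l k \<and> bit j k} \<longleftrightarrow> k \<in> (if odd l \<and> odd j then {0} else {}) \<union> Suc ` ?S"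
      by (cases k) (auto simp: bit_0 bit_Suc)
  qed
  then have "card {k. bit l k \<and> bit j k} = (if odd l \<and> odd j then 1 else 0) + card ?S"
    using fin by (simp add: card_image)
  then show ?thesis
    unfolding hadamard_def by (simp add: power_add)
qed

lemma abs_hadamard [simp]: "\<bar>hadamard l j\<bar> = 1"
  by (simp add: hadamard_def)

lemma hadamard_rows_orthogonal:
  assumes "l < 2 ^ k" "i < 2 ^ k" "l \<noteq> i"
  shows "(\<Sum>j<2 ^ k. hadamard l j * hadamard i j) = 0"
  using assms
proof (induction k arbitrary: l i)
  case 0
  then show ?case by simp
next
  case (Suc k)
  let ?h = "\<lambda>j. hadamard (l div 2) j * hadamard (i div 2) j"
  let ?\<sigma> = "if odd l = odd i then 1 else -1 :: real"
  have even_col: "hadamard l (2 * j) * hadamard i (2 * j) = ?h j" for j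
    by (subst (1 2) hadamard_rec) simp
  have odd_col: "hadamard l (2 * j + 1) * hadamard i (2 * j + 1) = ?\<sigma> * ?h j" for j
    by (subst (1 2) hadamard_rec) simp
  have "(\<Sum>j<2 ^ Suc k. hadamard l j * hadamard i j)
      = (\<Sum>j<2 ^ k. hadamard l (2 * j) * hadamard i (2 * j))
        + (\<Sum>j<2 ^ k. hadamard l (2 * j + 1) * hadamard i (2 * j + 1))"
    using sum_split_even_odd[of "\<lambda>j. hadamard l j * hadamard i j" "\<lambda>j. hadamard l j * hadamard i j"]
    by simp
  also have "\<dots> = (1 + ?\<sigma>) * (\<Sum>j<2 ^ k. ?h j)"
    by (simp only: even_col odd_col flip: sum_distrib_left) (simp add: algebra_simps)
  also have "\<dots> = 0"
  proof (cases "odd l = odd i")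
    case True
    have "l = 2 * (l div 2) + l mod 2" "i = 2 * (i div 2) + i mod 2" by simp_all
    moreover have "l mod 2 = i mod 2" using True by (simp add: mod2_eq_if)
    ultimately have "l div 2 \<noteq> i div 2" using Suc.prems(3) by metis
    then show ?thesis
      using Suc.IH[of "l div 2" "i div 2"] Suc.prems by simp
  qed simp
  finally show ?case .
qed

section \<open>Columns of the combined encoding matrices\<close>

lemma Fmat_below_diagonal:
  assumes "0 < \<beta>" "0 < L"
  shows "\<beta> ^ (m + 1 + k) * Fmat L \<beta> (m + 1 + k) m
    = - (1 - \<beta> ^ (2 * L)) / real L * \<beta> ^ m * (\<beta> ^ (2 * L)) ^ (k div L)"
proof -
  define q r where "q = k div L" and "r = k mod L"
  have k: "k = L * q + r"
    unfolding q_def r_def by simp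
  have "\<beta> powi (int L * int q - int r) = \<beta> ^ (L * q) / \<beta> ^ r"
    using assms by (simp add: power_int_diff flip: of_nat_mult)
  then have "\<beta> ^ (m + 1 + k) * Fmat L \<beta> (m + 1 + k) m
      = - (1 - \<beta> ^ (2 * L)) / real L * (\<beta> ^ (m + 1 + k) * \<beta> ^ (L * q) / (\<beta> ^ r * \<beta>))"
    unfolding Fmat_def q_def r_def by (simp add: mult_ac)
  also have "\<beta> ^ (m + 1 + k) * \<beta> ^ (L * q) / (\<beta> ^ r * \<beta>) = \<beta> ^ m * (\<beta> ^ (2 * L)) ^ q"
  proof -
    have "m + 1 + k + L * q = (m + 2 * L * q) + (r + 1)"
      unfolding k by simp
    then have "\<beta> ^ (m + 1 + k) * \<beta> ^ (L * q) = \<beta> ^ m * (\<beta> ^ (2 * L)) ^ q * (\<beta> ^ r * \<beta>)"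
      by (simp only: flip: power_add power_mult) (simp add: power_add)
    then show ?thesis
      using assms by simp
  qed
  finally show ?thesis
    unfolding q_def by simp
qed

lemma weighted_Fmat_column:
  assumes "0 < \<beta>" "0 < L" "m \<le> Nh"
  shows "(\<Sum>t\<le>Nh. qvec \<beta> t * c t * Fmat L \<beta> t m)
    = - (1 - \<beta> ^ (2 * L)) / real L * \<beta> ^ m
      * (\<Sum>k<Nh - m. (\<beta> ^ (2 * L)) ^ (k div L) * c (m + 1 + k))"
proof -
  let ?g = "\<lambda>t. qvec \<beta> t * c t * Fmat L \<beta> t m"
  have "(\<Sum>t\<le>Nh. ?g t) = (\<Sum>t\<in>{0 + (m + 1)..<(Nh - m) + (m + 1)}. ?g t)"
    using assms(3) by (intro sum.mono_neutral_right) (auto simp: Fmat_def)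
  also have "\<dots> = (\<Sum>k<Nh - m. ?g (m + 1 + k))"
    by (simp only: sum.shift_bounds_nat_ivl atLeast0LessThan add.commute)
  also have "\<dots> = (\<Sum>k<Nh - m. c (m + 1 + k) * (\<beta> ^ (m + 1 + k) * Fmat L \<beta> (m + 1 + k) m))"
    by (simp add: qvec_def mult_ac)
  also have "\<dots> = (\<Sum>k<Nh - m. c (m + 1 + k)
      * (- (1 - \<beta> ^ (2 * L)) / real L * \<beta> ^ m * (\<beta> ^ (2 * L)) ^ (k div L)))"
    by (simp only: Fmat_below_diagonal[OF assms(1,2)])
  finally show ?thesis
    by (simp add: sum_distrib_left mult_ac)
qed

lemma normIF_column_eq:
  assumes "0 < \<beta>" "0 < L" "m \<le> Nh"
  defines "a \<equiv> \<beta> ^ (2 * L)" and "K \<equiv> Nh - m"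
  shows "(\<Sum>t\<le>Nh. qvec \<beta> t * ((if t = m then 1 else 0) + Fmat L \<beta> t m))
    = \<beta> ^ m * a ^ (K div L) * (1 - real (K mod L) * (1 - a) / real L)"
proof -
  have blocks: "(\<Sum>k<K. a ^ (k div L))
      = real L * (\<Sum>j<K div L. a ^ j) + real (K mod L) * a ^ (K div L)"
    using sum_power_div_blocks[OF assms(2), of a "\<lambda>_. 1" K] by (simp add: sum_distrib_left mult_ac)
  have "(\<Sum>t\<le>Nh. qvec \<beta> t * ((if t = m then 1 else 0) + Fmat L \<beta> t m))
      = \<beta> ^ m + (\<Sum>t\<le>Nh. qvec \<beta> t * 1 * Fmat L \<beta> t m)"
    using assms(3)
    by (simp add: distrib_left sum.distrib qvec_def mult.commute[of "\<beta> ^ _"]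
        if_distrib[of "\<lambda>x. x * _"] cong: if_cong)
  also have "\<dots> = \<beta> ^ m * (1 - (1 - a) / real L * (\<Sum>k<K. a ^ (k div L)))"
    using assms(2) unfolding weighted_Fmat_column[OF assms(1-3)] a_def K_def
    by (simp add: field_simps)
  also have "(1 - a) / real L * (\<Sum>k<K. a ^ (k div L))
      = (1 - a ^ (K div L)) + a ^ (K div L) * (real (K mod L) * (1 - a) / real L)"
    using assms(2) by (simp add: blocks one_diff_power_eq[of a] field_simps)
  finally show ?thesis
    by (simp add: algebra_simps)
qed

lemma normIF_column_abs_le:
  assumes "0 < \<beta>" "\<beta> < 1" "0 < L" "m \<le> Nh"
  shows "\<bar>\<Sum>t\<le>Nh. qvec \<beta> t * ((if t = m then 1 else 0) + Fmat L \<beta> t m)\<bar>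
    \<le> \<beta> ^ m * (\<beta> ^ (2 * L)) ^ ((Nh - m) div L)"
proof -
  define a K where "a = \<beta> ^ (2 * L)" and "K = Nh - m"
  have a: "0 < a" "a \<le> 1"
    unfolding a_def using assms by (auto simp: power_le_one)
  have "real (K mod L) * (1 - a) \<le> real L * 1"
    using a assms(3) by (intro mult_mono) auto
  then have "real (K mod L) * (1 - a) / real L \<le> 1"
    using assms(3) by (simp add: divide_le_eq)
  moreover have "0 \<le> real (K mod L) * (1 - a) / real L"
    using a by simp
  ultimately have "\<bar>1 - real (K mod L) * (1 - a) / real L\<bar> \<le> 1"
    by linarith
  then show ?thesis
    using normIF_column_eq[OF assms(1,3,4)] a assms(1)
    unfolding a_def[symmetric] K_def[symmetric] by (simp add: abs_mult mult_left_le)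
qed

lemma normCCF_column_abs_le:
  assumes "0 < \<beta>" "\<beta> < 1" "L = 2 ^ n" "l < L" "i < L" "l \<noteq> i" "m \<le> Nh"
  shows "\<bar>\<Sum>t\<le>Nh. qvec \<beta> t * Cdiag L l t * Cdiag L i t * Fmat L \<beta> t m\<bar>
    \<le> \<beta> ^ m * (\<beta> ^ (2 * L)) ^ ((Nh - m) div L)"
proof -
  have L: "0 < L"
    using assms(3) by simp
  define a K where "a = \<beta> ^ (2 * L)" and "K = Nh - m"
  define c where "c t = Cdiag L l t * Cdiag L i t" for t
  have a: "0 < a" "a \<le> 1"
    unfolding a_def using assms by (auto simp: power_le_one)
  have c_periodic: "c (t + L) = c t" for t
    unfolding c_def Cdiag_def by simp
  \<comment> \<open>Orthogonality of the Hadamard rows \<open>l \<noteq> i\<close> makes every full block of the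
    column sum cancel; only the last, partial block survives.\<close>
  have "(\<Sum>r<L. c r) = (\<Sum>r<L. hadamard l r * hadamard i r)"
    unfolding c_def Cdiag_def by simp
  also have "\<dots> = 0"
    using hadamard_rows_orthogonal assms(3-6) by blast
  finally have blocks_zero: "(\<Sum>r<L. c (m + 1 + (j * L + r))) = 0" for j
    using sum_periodic_shift[of c L "m + 1 + j * L"] c_periodic by (simp add: add.assoc)
  have "(\<Sum>t\<le>Nh. qvec \<beta> t * Cdiag L l t * Cdiag L i t * Fmat L \<beta> t m)
      = - (1 - a) / real L * \<beta> ^ m * (\<Sum>k<K. a ^ (k div L) * c (m + 1 + k))"
    using weighted_Fmat_column[OF assms(1) L assms(7), of c]
    unfolding a_def K_def c_def by (simp add: mult.assoc)
  also have "(\<Sum>k<K. a ^ (k div L) * c (m + 1 + k))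
      = a ^ (K div L) * (\<Sum>r<K mod L. c (m + 1 + (K div L * L + r)))"
    using sum_power_div_blocks[OF L, of a "\<lambda>k. c (m + 1 + k)" K] blocks_zero by simp
  finally have column: "\<bar>\<Sum>t\<le>Nh. qvec \<beta> t * Cdiag L l t * Cdiag L i t * Fmat L \<beta> t m\<bar>
      = (1 - a) / real L * \<beta> ^ m * a ^ (K div L) * \<bar>\<Sum>r<K mod L. c (m + 1 + (K div L * L + r))\<bar>"
    using a assms(1) by (simp add: abs_mult)
  have "\<bar>\<Sum>r<K mod L. c (m + 1 + (K div L * L + r))\<bar> \<le> real (K mod L)"
    using sum_abs[of "\<lambda>r. c (m + 1 + (K div L * L + r))" "{..<K mod L}"]
    by (simp add: c_def Cdiag_def abs_mult)
  also have "\<dots> \<le> real L"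
    using L by simp
  finally have "\<bar>\<Sum>t\<le>Nh. qvec \<beta> t * Cdiag L l t * Cdiag L i t * Fmat L \<beta> t m\<bar>
      \<le> (1 - a) / real L * \<beta> ^ m * a ^ (K div L) * real L"
    unfolding column using a assms(1) by (intro mult_left_mono) auto
  also have "\<dots> \<le> \<beta> ^ m * a ^ (K div L)"
    using a assms(1) L by (simp add: mult_left_le_one_le)
  finally show ?thesis
    unfolding a_def K_def .
qed

lemma sum_squares_le_of_column_bound:
  fixes \<beta> :: real
  assumes "0 < \<beta>" "\<beta> < 1" "0 < L"
    and column: "\<And>m. m \<le> Nh \<Longrightarrow> \<bar>v m\<bar> \<le> \<beta> ^ m * (\<beta> ^ (2 * L)) ^ ((Nh - m) div L)"
  shows "(\<Sum>m\<le>Nh. (v m)\<^sup>2) \<le> \<beta> ^ (2 * Nh) / (\<beta> ^ (4 * L) * (1 - \<beta>\<^sup>2))"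
proof -
  have squared_column: "(v m)\<^sup>2 \<le> \<beta> ^ (2 * Nh) / \<beta> ^ (4 * L) * (\<beta>\<^sup>2) ^ (Nh - m)" if "m \<le> Nh" for m
  proof -
    have "\<bar>v m\<bar> * \<beta> ^ (2 * L) \<le> \<beta> ^ m * ((\<beta> ^ (2 * L)) ^ ((Nh - m) div L) * \<beta> ^ (2 * L))"
      using column[OF that] assms(1) by (simp add: mult_right_mono mult.assoc)
    also have "\<dots> \<le> \<beta> ^ m * \<beta> ^ (2 * (Nh - m))"
      using power_div_blocks_le assms by (simp add: mult_left_mono)
    finally have "(\<bar>v m\<bar> * \<beta> ^ (2 * L))\<^sup>2 \<le> (\<beta> ^ m * \<beta> ^ (2 * (Nh - m)))\<^sup>2"
      by (simp add: power_mono)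
    also have "\<dots> = \<beta> ^ (2 * Nh) * (\<beta>\<^sup>2) ^ (Nh - m)"
      using that by (simp flip: power_add power_mult power_mult_distrib) (simp add: algebra_simps)
    finally show ?thesis
      using assms(1) by (simp add: power_mult_distrib field_simps flip: power_mult power_add)
  qed
  have "(\<Sum>m\<le>Nh. (v m)\<^sup>2) \<le> \<beta> ^ (2 * Nh) / \<beta> ^ (4 * L) * (\<Sum>m\<le>Nh. (\<beta>\<^sup>2) ^ (Nh - m))"
    unfolding sum_distrib_left by (rule sum_mono) (use squared_column in auto)
  also have "(\<Sum>m\<le>Nh. (\<beta>\<^sup>2) ^ (Nh - m)) = (\<Sum>j\<le>Nh. (\<beta>\<^sup>2) ^ j)"
    using sum.atLeastAtMost_rev[of "\<lambda>j. (\<beta>\<^sup>2) ^ j" 0 Nh] by (simp add: atLeast0AtMost)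
  also have "\<dots> \<le> 1 / (1 - \<beta>\<^sup>2)"
    using assms(1,2) by (intro geometric_sum_le) (auto simp: power_less_one_iff)
  finally show ?thesis
    using assms(1) by (simp add: mult_left_mono divide_simps)
qed

lemma normIF_le:
  assumes "0 < \<beta>" "\<beta> < 1" "0 < L"
  shows "normIF L \<beta> Nh \<le> \<beta> ^ (2 * Nh) / (\<beta> ^ (4 * L) * (1 - \<beta>\<^sup>2))"
  unfolding normIF_def
  by (rule sum_squares_le_of_column_bound[OF assms]) (rule normIF_column_abs_le[OF assms])

lemma normCCF_le:
  assumes "0 < \<beta>" "\<beta> < 1" "L = 2 ^ n" "l < L" "i < L" "l \<noteq> i"
  shows "normCCF L \<beta> Nh l i \<le> \<beta> ^ (2 * Nh) / (\<beta> ^ (4 * L) * (1 - \<beta>\<^sup>2))"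
  unfolding normCCF_def using assms(1,2) _ normCCF_column_abs_le[OF assms]
  by (rule sum_squares_le_of_column_bound) (simp add: assms(3))

lemma normIF_ge:
  assumes "0 < \<beta>"
  shows "\<beta> ^ (2 * Nh) \<le> normIF L \<beta> Nh"
proof -
  have "(\<Sum>t\<le>Nh. qvec \<beta> t * ((if t = Nh then 1 else 0) + Fmat L \<beta> t Nh)) = \<beta> ^ Nh"
    by (subst sum.cong[OF refl, of _ _ "\<lambda>t. if t = Nh then \<beta> ^ Nh else 0"])
      (auto simp: Fmat_def qvec_def)
  moreover have "(\<Sum>m\<in>{Nh}. (\<Sum>t\<le>Nh. qvec \<beta> t * ((if t = m then 1 else 0) + Fmat L \<beta> t m))\<^sup>2)
      \<le> normIF L \<beta> Nh"
    unfolding normIF_def by (rule sum_mono2) auto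
  ultimately show ?thesis
    by (simp add: power_mult mult.commute)
qed

section \<open>Order of the output SNR under perfect feedback\<close>

definition noise_gain :: "nat \<Rightarrow> real \<Rightarrow> nat \<Rightarrow> nat \<Rightarrow> real" where
  "noise_gain L \<beta> Nh l = normIF L \<beta> Nh + (\<Sum>i\<in>{0..<L} - {l}. normCCF L \<beta> Nh l i)"

lemma SNR_perfect_feedback:
  "SNR L P sb2 0 \<beta> \<gamma> N l = P * real N * (1 - \<gamma>) / (real L * sb2 * noise_gain L \<beta> (N - L) l)"
  unfolding SNR_def noise_gain_def by (simp add: distrib_left mult_ac)

lemma noise_gain_ge:
  assumes "0 < \<beta>"
  shows "\<beta> ^ (2 * Nh) \<le> noise_gain L \<beta> Nh l"
proof -
  have "0 \<le> (\<Sum>i\<in>{0..<L} - {l}. normCCF L \<beta> Nh l i)"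
    unfolding normCCF_def by (intro sum_nonneg) simp
  then show ?thesis
    unfolding noise_gain_def using normIF_ge[OF assms, of Nh L] by linarith
qed

lemma noise_gain_le:
  assumes "0 < \<beta>" "\<beta> < 1" "L = 2 ^ n" "l < L"
  shows "noise_gain L \<beta> Nh l \<le> real L * (\<beta> ^ (2 * Nh) / (\<beta> ^ (4 * L) * (1 - \<beta>\<^sup>2)))"
proof -
  let ?B = "\<beta> ^ (2 * Nh) / (\<beta> ^ (4 * L) * (1 - \<beta>\<^sup>2))"
  have "(\<Sum>i\<in>{0..<L} - {l}. normCCF L \<beta> Nh l i) \<le> real (card ({0..<L} - {l})) * ?B"
    using normCCF_le[OF assms(1-3)] assms(4) by (intro sum_bounded_above) auto
  also have "real (card ({0..<L} - {l})) = real L - 1"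
    using assms(4) by simp
  finally have "(\<Sum>i\<in>{0..<L} - {l}. normCCF L \<beta> Nh l i) \<le> (real L - 1) * ?B" .
  moreover have "normIF L \<beta> Nh \<le> ?B"
    using normIF_le[OF assms(1,2)] assms(3) by simp
  ultimately have "noise_gain L \<beta> Nh l \<le> ?B + (real L - 1) * ?B"
    unfolding noise_gain_def by linarith
  also have "\<dots> = real L * ?B"
    by (simp only: left_diff_distrib mult_1_left diff_add_cancel add_diff_cancel_left')
  finally show ?thesis .
qed

lemma SNR_nonneg:
  assumes "0 < \<beta>" "0 < sb2" "0 \<le> P" "\<gamma> \<le> 1"
  shows "0 \<le> SNR L P sb2 0 \<beta> \<gamma> N l"
  unfolding SNR_perfect_feedback
  using assms noise_gain_ge[OF assms(1), of "N - L" L l] zero_le_power[of \<beta>]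
  by (smt (verit) divide_nonneg_nonneg mult_nonneg_nonneg of_nat_0_le_iff)

lemma SNR_le:
  assumes "0 < \<beta>" "\<beta> \<le> 1" "0 < L" "0 < sb2" "0 \<le> P" "0 \<le> \<gamma>" "\<gamma> \<le> 1"
  shows "SNR L P sb2 0 \<beta> \<gamma> N l \<le> P * real N / (real L * sb2 * \<beta> ^ (2 * N))"
proof -
  let ?G = "noise_gain L \<beta> (N - L) l"
  have "\<beta> ^ (2 * N) \<le> \<beta> ^ (2 * (N - L))"
    using assms(1,2) by (intro power_decreasing) auto
  also have "\<dots> \<le> ?G"
    by (rule noise_gain_ge[OF assms(1)])
  finally have "real L * sb2 * \<beta> ^ (2 * N) \<le> real L * sb2 * ?G"
    using assms(3,4) by simp
  moreover have "0 < real L * sb2 * \<beta> ^ (2 * N)"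
    using assms(1,3,4) by simp
  ultimately have "P * real N * (1 - \<gamma>) / (real L * sb2 * ?G)
      \<le> P * real N * (1 - \<gamma>) / (real L * sb2 * \<beta> ^ (2 * N))"
    using assms(5,7) by (intro divide_left_mono) auto
  also have "\<dots> \<le> P * real N / (real L * sb2 * \<beta> ^ (2 * N))"
    using assms(1,3-6) by (intro divide_right_mono mult_left_le) auto
  finally show ?thesis
    unfolding SNR_perfect_feedback .
qed

lemma SNR_ge:
  assumes "0 < \<beta>" "\<beta> < 1" "L = 2 ^ n" "l < L" "0 < sb2" "0 \<le> P" "\<gamma> \<le> 1"
  shows "P * (1 - \<gamma>) * \<beta> ^ (6 * L) * (1 - \<beta>\<^sup>2) / ((real L)\<^sup>2 * sb2) * real N / \<beta> ^ (2 * N)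
    \<le> SNR L P sb2 0 \<beta> \<gamma> N l"
proof -
  let ?G = "noise_gain L \<beta> (N - L) l"
  let ?B = "\<beta> ^ (2 * N) / (\<beta> ^ (6 * L) * (1 - \<beta>\<^sup>2))"
  have L: "0 < L"
    using assms(3) by simp
  have \<beta>2: "0 < 1 - \<beta>\<^sup>2"
    using assms(1,2) by (simp add: power_less_one_iff)
  have "\<beta> ^ (2 * (N - L)) * \<beta> ^ (2 * L) \<le> \<beta> ^ (2 * N)"
    using assms(1,2) by (simp flip: power_add)
  then have "\<beta> ^ (2 * (N - L)) \<le> \<beta> ^ (2 * N) / \<beta> ^ (2 * L)"
    using assms(1) by (simp add: le_divide_eq)
  then have "\<beta> ^ (2 * (N - L)) / (\<beta> ^ (4 * L) * (1 - \<beta>\<^sup>2))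
      \<le> \<beta> ^ (2 * N) / \<beta> ^ (2 * L) / (\<beta> ^ (4 * L) * (1 - \<beta>\<^sup>2))"
    using assms(1) \<beta>2 by (intro divide_right_mono) auto
  also have "\<dots> = ?B"
    by (simp add: mult.assoc flip: power_add)
  finally have "?G \<le> real L * ?B"
    using noise_gain_le[OF assms(1-4), of "N - L"]
    by (meson mult_left_mono of_nat_0_le_iff order_trans)
  then have "real L * sb2 * ?G \<le> real L * sb2 * (real L * ?B)"
    using assms(5) by (intro mult_left_mono) auto
  moreover have "0 < ?G"
    using zero_less_power[OF assms(1)] noise_gain_ge[OF assms(1)] by (rule order.strict_trans2)
  ultimately have "P * real N * (1 - \<gamma>) / (real L * sb2 * (real L * ?B))
      \<le> P * real N * (1 - \<gamma>) / (real L * sb2 * ?G)"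
    using assms(1,5-7) L \<beta>2 by (intro divide_left_mono mult_pos_pos) auto
  moreover have "P * real N * (1 - \<gamma>) / (real L * sb2 * (real L * ?B))
      = P * (1 - \<gamma>) * \<beta> ^ (6 * L) * (1 - \<beta>\<^sup>2) / ((real L)\<^sup>2 * sb2) * real N / \<beta> ^ (2 * N)"
    using assms(1) \<beta>2 by (simp add: field_simps power2_eq_square)
  ultimately show ?thesis
    unfolding SNR_perfect_feedback by simp
qed

section \<open>The Gaussian tail and the PAM error rate\<close>

lemma gaussQ_nonneg: "0 \<le> gaussQ y"
  unfolding gaussQ_def set_lebesgue_integral_def
  by (rule integral_nonneg_AE) (auto simp: indicator_def)

lemma integrable_std_normal_density_indicator:
  "integrable lborel (\<lambda>t. indicator {y<..} t *\<^sub>R std_normal_density t)"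
proof -
  have "integrable lborel (\<lambda>t. std_normal_density t * indicator {y<..} t)"
    by (rule integrable_real_mult_indicator) auto
  then show ?thesis
    by (simp add: mult.commute)
qed

text \<open>Chebyshev's inequality for the standard normal distribution.\<close>

lemma gaussQ_le:
  assumes "0 < y"
  shows "gaussQ y \<le> 1 / y\<^sup>2"
proof -
  have second_moment: "integrable lborel (\<lambda>t. std_normal_density t * t ^ (2 * 1) / y\<^sup>2)"
    using integrable_std_normal_moment[of "2 * 1"] by simp
  have "gaussQ y \<le> (LINT t|lborel. std_normal_density t * t ^ (2 * 1) / y\<^sup>2)"
    unfolding gaussQ_def set_lebesgue_integral_def
  proof (rule integral_mono[OF integrable_std_normal_density_indicator second_moment])
    fix t :: real
    show "indicator {y<..} t *\<^sub>R std_normal_density t \<le> std_normal_density t * t ^ (2 * 1) / y\<^sup>2"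
    proof (cases "y < t")
      case True
      then have "1 \<le> t\<^sup>2 / y\<^sup>2"
        using assms by (simp add: power_mono)
      then show ?thesis
        using True mult_left_mono[OF _ normal_density_nonneg] by fastforce
    qed simp
  qed
  also have "\<dots> = 1 / y\<^sup>2"
    using integral_std_normal_moment_even[of 1] by simp
  finally show ?thesis .
qed

lemma gaussQ_ge:
  assumes "y \<le> 1"
  shows "std_normal_density 2 \<le> gaussQ y"
proof -
  have box: "integrable lborel (\<lambda>t. std_normal_density 2 * indicator {1<..<2::real} t)"
    by (intro integrable_mult_right integrable_real_indicator) auto
  have "(LINT t|lborel. std_normal_density 2 * indicator {1<..<2::real} t) \<le> gaussQ y"
    unfolding gaussQ_def set_lebesgue_integral_def
  proof (rule integral_mono[OF box integrable_std_normal_density_indicator])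
    fix t :: real
    show "std_normal_density 2 * indicator {1<..<2} t \<le> indicator {y<..} t *\<^sub>R std_normal_density t"
    proof (cases "1 < t \<and> t < 2")
      case True
      then have "t\<^sup>2 \<le> 2\<^sup>2"
        by (intro power_mono) auto
      then have "std_normal_density 2 \<le> std_normal_density t"
        unfolding std_normal_density_def by (intro mult_left_mono) auto
      then show ?thesis
        using True assms by (simp add: indicator_def)
    qed (auto simp: indicator_def)
  qed
  then show ?thesis
    by (simp add: measure_def emeasure_lborel_Ioo)
qed

lemma error_formula_le:
  assumes "1 < M" "0 < S"
  shows "2 * (1 - 1 / M) * gaussQ (sqrt (6 / (M - 1) * S)) \<le> M / (3 * S)"
proof -
  let ?X = "6 / (M - 1) * S"
  have "6 / M * S \<le> ?X"
    using assms by (intro mult_right_mono divide_left_mono) auto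
  moreover have "0 < 6 / M * S"
    using assms by simp
  ultimately have "gaussQ (sqrt ?X) \<le> 1 / (6 / M * S)"
    using gaussQ_le[of "sqrt ?X"] by (smt (verit) frac_le real_sqrt_gt_0_iff real_sqrt_pow2)
  moreover have "0 \<le> 2 * (1 - 1 / M)" "2 * (1 - 1 / M) \<le> 2"
    using assms(1) by (simp_all add: field_simps)
  ultimately have "2 * (1 - 1 / M) * gaussQ (sqrt ?X) \<le> 2 * (1 / (6 / M * S))"
    using gaussQ_nonneg by (intro mult_mono) auto
  then show ?thesis
    by simp
qed

lemma error_formula_ge:
  assumes "2 \<le> M" "0 \<le> S" "12 * S \<le> M"
  shows "std_normal_density 2 \<le> 2 * (1 - 1 / M) * gaussQ (sqrt (6 / (M - 1) * S))"
proof -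
  have "6 / (M - 1) * S \<le> 12 / M * S"
    using assms(1,2) by (intro mult_right_mono) (auto simp: field_simps)
  also have "\<dots> \<le> 1"
    using assms by (simp add: field_simps)
  finally have "std_normal_density 2 \<le> gaussQ (sqrt (6 / (M - 1) * S))"
    by (intro gaussQ_ge) simp
  moreover have "1 \<le> 2 * (1 - 1 / M)"
    using assms(1) by (simp add: field_simps)
  ultimately show ?thesis
    using gaussQ_nonneg normal_density_nonneg by (metis mult_1 mult_mono zero_le_one order_trans)
qed

lemma Pe_eq:
  "Pe L P sb2 sf2 \<beta> \<gamma> N R l
    = 2 * (1 - 1 / (2 powr (2 * R)) ^ N)
      * gaussQ (sqrt (6 / ((2 powr (2 * R)) ^ N - 1) * SNR L P sb2 sf2 \<beta> \<gamma> N l))"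
proof -
  have "2 powr (2 * real N * R) = (2 powr (2 * R)) ^ N"
    by (simp add: powr_powr mult_ac flip: powr_realpow)
  then show ?thesis
    unfolding Pe_def by simp
qed

lemma Pe_nonneg:
  assumes "0 \<le> R"
  shows "0 \<le> Pe L P sb2 sf2 \<beta> \<gamma> N R l"
proof -
  have "1 \<le> 2 powr (2 * real N * R)"
    using assms by (intro ge_one_powr_ge_zero) auto
  then have "0 \<le> 2 * (1 - 1 / 2 powr (2 * real N * R))"
    by (simp add: divide_le_eq)
  then show ?thesis
    unfolding Pe_def using gaussQ_nonneg by (rule mult_nonneg_nonneg)
qed

lemma two_powr_neg_log:
  assumes "0 < \<beta>"
  shows "2 powr (2 * - log 2 \<beta>) = 1 / \<beta>\<^sup>2"
proof -
  have "2 powr (2 * - log 2 \<beta>) = (2 powr log 2 \<beta>) powr (- 2)"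
    by (simp add: powr_powr mult_ac)
  also have "\<dots> = 1 / \<beta>\<^sup>2"
    using assms by (simp add: powr_minus powr_realpow divide_inverse)
  finally show ?thesis .
qed

lemma Pe_tendsto_zero_at_log_rate:
  assumes "0 < \<beta>" "\<beta> < 1" "L = 2 ^ n" "l < L" "0 < sb2" "0 < P" "\<gamma> < 1"
  shows "(\<lambda>N. Pe L P sb2 0 \<beta> \<gamma> N (- log 2 \<beta>) l) \<longlonglongrightarrow> 0"
proof -
  define c where "c = P * (1 - \<gamma>) * \<beta> ^ (6 * L) * (1 - \<beta>\<^sup>2) / ((real L)\<^sup>2 * sb2)"
  let ?M = "\<lambda>N. (1 / \<beta>\<^sup>2) ^ N :: real"
  let ?S = "\<lambda>N. SNR L P sb2 0 \<beta> \<gamma> N l"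
  have "0 < L"
    using assms(3) by simp
  then have c: "0 < c"
    unfolding c_def using assms by (simp add: power_less_one_iff)
  have "Pe L P sb2 0 \<beta> \<gamma> N (- log 2 \<beta>) l \<le> 1 / (3 * c) / real N" if "1 \<le> N" for N
  proof -
    have M: "1 < ?M N"
      using assms(1,2) that by (simp add: one_less_power power_less_one_iff)
    have S: "c * real N * ?M N \<le> ?S N"
      using SNR_ge[OF assms(1-5) less_imp_le[OF assms(6)] less_imp_le[OF assms(7)], where N = N]
      unfolding c_def by (simp add: power_mult power_one_over)
    have pos: "0 < c * real N * ?M N"
      using c M that by simp
    have "Pe L P sb2 0 \<beta> \<gamma> N (- log 2 \<beta>) l \<le> ?M N / (3 * ?S N)"
      unfolding Pe_eq two_powr_neg_log[OF assms(1)] using M pos S by (intro error_formula_le) auto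
    also have "\<dots> \<le> ?M N / (3 * (c * real N * ?M N))"
      using M pos S by (intro divide_left_mono) auto
    also have "\<dots> = 1 / (3 * c) / real N"
      using assms(1) by simp
    finally show ?thesis .
  qed
  moreover have "0 \<le> Pe L P sb2 0 \<beta> \<gamma> N (- log 2 \<beta>) l" for N
    using assms(1,2) by (intro Pe_nonneg) simp
  ultimately show ?thesis
    by (intro tendsto_sandwich[OF always_eventually eventually_sequentiallyI[of 1]
          tendsto_const lim_const_over_n[of "1 / (3 * c)"]]) auto
qed

lemma eventually_SNR_le_power:
  assumes "0 < \<beta>" "\<beta> < 1" "0 < L" "0 < sb2" "0 < P" "0 \<le> \<gamma>" "\<gamma> \<le> 1"
    and "1 / \<beta>\<^sup>2 < \<rho>"
  shows "eventually (\<lambda>N. 12 * SNR L P sb2 0 \<beta> \<gamma> N l \<le> \<rho> ^ N) sequentially"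
proof -
  define \<theta> where "\<theta> = \<rho> * \<beta>\<^sup>2"
  have \<theta>: "1 < \<theta>"
    unfolding \<theta>_def using assms(1,8) by (simp add: field_simps)
  have "(\<lambda>N. 12 * P / (real L * sb2) * (real N / \<theta> ^ N)) \<longlonglongrightarrow> 0"
    using lim_n_over_pown[of \<theta>] \<theta> by (intro tendsto_mult_right_zero) simp
  then have "eventually (\<lambda>N. 12 * P / (real L * sb2) * (real N / \<theta> ^ N) < 1) sequentially"
    by (rule order_tendstoD) simp
  then show ?thesis
  proof (rule eventually_mono)
    fix N
    assume small: "12 * P / (real L * sb2) * (real N / \<theta> ^ N) < 1"
    have "0 < \<rho>"
      using assms(1,8) by (smt (verit) zero_less_divide_1_iff zero_less_power)
    have "12 * SNR L P sb2 0 \<beta> \<gamma> N l \<le> 12 * (P * real N / (real L * sb2 * \<beta> ^ (2 * N)))"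
      using SNR_le[OF assms(1) less_imp_le[OF assms(2)] assms(3,4) less_imp_le[OF assms(5)]
          assms(6,7)]
      by (intro mult_left_mono) auto
    also have "\<dots> = \<rho> ^ N * (12 * P / (real L * sb2) * (real N / \<theta> ^ N))"
    proof -
      have "\<theta> ^ N = \<rho> ^ N * \<beta> ^ (2 * N)"
        unfolding \<theta>_def by (simp add: power_mult_distrib power_mult)
      then show ?thesis
        using assms(1,3,4) \<open>0 < \<rho>\<close> by (simp add: field_simps)
    qed
    also have "\<dots> \<le> \<rho> ^ N"
      using small \<open>0 < \<rho>\<close> by (intro mult_left_le) auto
    finally show "12 * SNR L P sb2 0 \<beta> \<gamma> N l \<le> \<rho> ^ N" .
  qed
qed

lemma Pe_not_tendsto_zero_above_log_rate:
  assumes "0 < \<beta>" "\<beta> < 1" "0 < L" "0 < sb2" "0 < P" "0 \<le> \<gamma>" "\<gamma> \<le> 1"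
    and "- log 2 \<beta> < R"
  shows "\<not> (\<lambda>N. Pe L P sb2 0 \<beta> \<gamma> N R l) \<longlonglongrightarrow> 0"
proof
  assume lim: "(\<lambda>N. Pe L P sb2 0 \<beta> \<gamma> N R l) \<longlonglongrightarrow> 0"
  define \<rho> where "\<rho> = 2 powr (2 * R)"
  have \<rho>: "1 / \<beta>\<^sup>2 < \<rho>"
    unfolding \<rho>_def two_powr_neg_log[OF assms(1), symmetric] using assms(8) by simp
  moreover have "1 < 1 / \<beta>\<^sup>2"
    using assms(1,2) by (simp add: power_less_one_iff)
  ultimately obtain n where "2 < \<rho> ^ n"
    using real_arch_pow[of \<rho> 2] by auto
  then have "eventually (\<lambda>N. 2 \<le> \<rho> ^ N) sequentially"
    using \<open>1 < 1 / \<beta>\<^sup>2\<close> \<rho>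
    by (intro eventually_sequentiallyI[of n]) (smt (verit) power_increasing)
  moreover have "eventually (\<lambda>N. 12 * SNR L P sb2 0 \<beta> \<gamma> N l \<le> \<rho> ^ N) sequentially"
    using assms(1-7) \<rho> by (rule eventually_SNR_le_power)
  moreover have "eventually (\<lambda>N. Pe L P sb2 0 \<beta> \<gamma> N R l < std_normal_density 2) sequentially"
    using lim by (rule order_tendstoD) (simp add: normal_density_pos)
  ultimately have "eventually (\<lambda>N. False) sequentially"
  proof eventually_elim
    case (elim N)
    have "std_normal_density 2 \<le> Pe L P sb2 0 \<beta> \<gamma> N R l"
      unfolding Pe_eq \<rho>_def[symmetric]
      using SNR_nonneg[OF assms(1,4) less_imp_le[OF assms(5)] assms(7)] elim(1,2)
      by (intro error_formula_ge) auto
    with elim(3) show False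
      by simp
  qed
  then show False
    by simp
qed

section \<open>Achievable rates\<close>

lemma cSup_eq_of_interval_subset:
  fixes S :: "real set"
  assumes "a < b" "{a<..<b} \<subseteq> S" "S \<subseteq> {..b}"
  shows "Sup S = b"
proof (rule antisym)
  show "Sup S \<le> b"
    using assms by (intro cSup_least) auto
  have "b = Sup {a<..<b}"
    using assms(1) by simp
  also have "\<dots> \<le> Sup S"
    using assms by (intro cSup_subset_mono) (auto simp: bdd_above_def)
  finally show "b \<le> Sup S" .
qed

definition beta_fun :: "nat \<Rightarrow> real \<Rightarrow> real" where
  "beta_fun L \<beta> = (1 - \<beta> ^ (2 * L))\<^sup>2 / ((real L)\<^sup>2 * \<beta> ^ (2 * L) * (1 - \<beta>\<^sup>2))"

lemma beta_eq_iff_beta_fun: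
  "beta_eq L P sb2 0 \<gamma> \<beta> \<longleftrightarrow> 0 < \<beta> \<and> \<beta> < 1 \<and> beta_fun L \<beta> = P * \<gamma> / (real L * sb2)"
  unfolding beta_eq_def beta_fun_def by simp

lemma power_defect_ratio_eq_sum:
  fixes x :: real
  assumes "0 < x" "x < 1"
  shows "(1 - x ^ L)\<^sup>2 / (x ^ L * (1 - x)) = (\<Sum>k<L. (1 / x) ^ (L - k) - x ^ k)"
proof -
  have "(\<Sum>k<L. (1 / x) ^ (L - k) - x ^ k) = (\<Sum>k<L. x ^ k * (1 / x ^ L - 1))"
  proof (rule sum.cong[OF refl])
    fix k
    assume "k \<in> {..<L}"
    then have "x ^ L = x ^ (L - k) * x ^ k"
      by (simp flip: power_add)
    then show "(1 / x) ^ (L - k) - x ^ k = x ^ k * (1 / x ^ L - 1)"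
      using assms by (simp add: power_one_over field_simps)
  qed
  also have "\<dots> = (1 - x ^ L) / (1 - x) * (1 / x ^ L - 1)"
    using assms(2) by (simp add: one_diff_power_eq flip: sum_distrib_right)
  finally show ?thesis
    using assms by (simp add: field_simps power2_eq_square)
qed

lemma beta_fun_strict_antimono:
  assumes "0 < b" "b < c" "c < 1" "0 < L"
  shows "beta_fun L c < beta_fun L b"
proof -
  have eq: "beta_fun L \<beta> = (\<Sum>k<L. (1 / \<beta>\<^sup>2) ^ (L - k) - (\<beta>\<^sup>2) ^ k) / (real L)\<^sup>2"
    if "0 < \<beta>" "\<beta> < 1" for \<beta> :: real
  proof -
    have "beta_fun L \<beta> = (1 - (\<beta>\<^sup>2) ^ L)\<^sup>2 / ((\<beta>\<^sup>2) ^ L * (1 - \<beta>\<^sup>2)) / (real L)\<^sup>2"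
      unfolding beta_fun_def power_mult by (simp only: divide_divide_eq_left mult_ac)
    then show ?thesis
      using power_defect_ratio_eq_sum[of "\<beta>\<^sup>2" L] that by (simp add: power_less_one_iff)
  qed
  have "b\<^sup>2 < c\<^sup>2"
    using assms by (intro power_strict_mono) auto
  have "(\<Sum>k<L. (1 / c\<^sup>2) ^ (L - k) - (c\<^sup>2) ^ k) < (\<Sum>k<L. (1 / b\<^sup>2) ^ (L - k) - (b\<^sup>2) ^ k)"
  proof (rule sum_strict_mono)
    fix k
    assume "k \<in> {..<L}"
    moreover have "1 / c\<^sup>2 < 1 / b\<^sup>2"
      using assms \<open>b\<^sup>2 < c\<^sup>2\<close> by (intro divide_strict_left_mono) auto
    ultimately have "(1 / c\<^sup>2) ^ (L - k) < (1 / b\<^sup>2) ^ (L - k)"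
      using assms by (intro power_strict_mono) auto
    moreover have "(b\<^sup>2) ^ k \<le> (c\<^sup>2) ^ k"
      using assms \<open>b\<^sup>2 < c\<^sup>2\<close> by (intro power_mono) auto
    ultimately show "(1 / c\<^sup>2) ^ (L - k) - (c\<^sup>2) ^ k < (1 / b\<^sup>2) ^ (L - k) - (b\<^sup>2) ^ k"
      by linarith
  qed (use assms in auto)
  then show ?thesis
    using assms by (simp add: eq divide_strict_right_mono)
qed

lemma beta_fun_pos:
  assumes "0 < \<beta>" "\<beta> < 1" "0 < L"
  shows "0 < beta_fun L \<beta>"
proof -
  have "\<beta> ^ (2 * L) < 1" "\<beta>\<^sup>2 < 1"
    using assms by (simp_all add: power_less_one_iff)
  then show ?thesis
    unfolding beta_fun_def using assms by simp
qed

lemma achievable_below_log_beta: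
  assumes "L = 2 ^ n" "0 < P" "0 < sb2" "0 < \<beta>inf"
    and fixpoint: "beta_fun L \<beta>inf = P / (sb2 * real L)"
    and "0 < R" "R < - log 2 \<beta>inf"
  shows "achievable L P sb2 0 R"
proof -
  define \<beta> where "\<beta> = 2 powr (- R)"
  define \<gamma> where "\<gamma> = beta_fun L \<beta> * real L * sb2 / P"
  have L: "0 < L"
    using assms(1) by simp
  have \<beta>: "0 < \<beta>" "\<beta> < 1" "\<beta>inf < \<beta>"
    unfolding \<beta>_def using assms(4,6,7)
      powr_less_mono[of "log 2 \<beta>inf" "- R" 2] powr_less_mono[of "- R" 0 2]
    by auto
  have R: "R = - log 2 \<beta>"
    unfolding \<beta>_def by simp
  have "beta_fun L \<beta> < P / (sb2 * real L)"
    using beta_fun_strict_antimono[OF assms(4) \<beta>(3,2) L] fixpoint by simp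
  then have \<gamma>: "0 < \<gamma>" "\<gamma> < 1"
    unfolding \<gamma>_def using beta_fun_pos[OF \<beta>(1,2) L] L assms(2,3) by (simp_all add: field_simps)
  have "beta_eq L P sb2 0 \<gamma> \<beta>"
    unfolding beta_eq_iff_beta_fun \<gamma>_def using \<beta> L assms(2,3) by simp
  moreover have "(\<lambda>N. Pe L P sb2 0 \<beta> \<gamma> N R l) \<longlonglongrightarrow> 0" if "l < L" for l
    unfolding R using \<beta>(1,2) assms(1) that assms(3,2) \<gamma>(2) by (rule Pe_tendsto_zero_at_log_rate)
  ultimately show ?thesis
    unfolding achievable_def using assms(6) \<gamma> by auto
qed

lemma achievable_less_log_beta:
  assumes "0 < L" "0 < P" "0 < sb2" "0 < \<beta>inf" "\<beta>inf < 1"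
    and fixpoint: "beta_fun L \<beta>inf = P / (sb2 * real L)"
    and "achievable L P sb2 0 R"
  shows "R < - log 2 \<beta>inf"
proof -
  obtain \<gamma> \<beta> where \<gamma>: "0 < \<gamma>" "\<gamma> < 1" and \<beta>: "beta_eq L P sb2 0 \<gamma> \<beta>"
    and user0: "(\<lambda>N. Pe L P sb2 0 \<beta> \<gamma> N R 0) \<longlonglongrightarrow> 0"
    using assms(1,7) unfolding achievable_def by blast
  have \<beta>_range: "0 < \<beta>" "\<beta> < 1" and "beta_fun L \<beta> = P * \<gamma> / (real L * sb2)"
    using \<beta> unfolding beta_eq_iff_beta_fun by auto
  moreover have "P * \<gamma> / (real L * sb2) < P / (sb2 * real L)"
    using assms(1-3) \<gamma> by (simp add: mult.commute[of sb2] divide_strict_right_mono)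
  ultimately have "beta_fun L \<beta> < beta_fun L \<beta>inf"
    using fixpoint by simp
  then have "\<beta>inf < \<beta>"
    using beta_fun_strict_antimono[of \<beta> \<beta>inf L] \<beta>_range(1) assms(1,5)
    by (metis less_asym linorder_neqE_linordered_idom)
  then have "log 2 \<beta>inf < log 2 \<beta>"
    using assms(4) by simp
  moreover have "R \<le> - log 2 \<beta>"
    using Pe_not_tendsto_zero_above_log_rate[OF \<beta>_range assms(1,3,2)
        less_imp_le[OF \<gamma>(1)] less_imp_le[OF \<gamma>(2)]] user0
    by (meson not_le)
  ultimately show ?thesis
    by simp
qed

theorem lemma2:
  fixes L :: nat and P sb2 \<beta>inf :: real
  assumes "\<exists>k. L = 2 ^ k"
    and "P > 0" and "sb2 > 0"
    and "0 < \<beta>inf" and "\<beta>inf < 1"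
    and "(1 - \<beta>inf ^ (2 * L))\<^sup>2 / ((real L)\<^sup>2 * \<beta>inf ^ (2 * L) * (1 - \<beta>inf\<^sup>2))
           = P / (sb2 * real L)"
  shows "Csum L P sb2 0 = - real L * log 2 \<beta>inf"
proof -
  obtain n where L: "L = 2 ^ n"
    using assms(1) by blast
  have fixpoint: "beta_fun L \<beta>inf = P / (sb2 * real L)"
    using assms(6) unfolding beta_fun_def .
  let ?rates = "(\<lambda>R. real L * R) ` {R. achievable L P sb2 0 R}"
  have "0 < - real L * log 2 \<beta>inf"
    using L assms(4,5) by (simp add: mult_pos_neg)
  moreover have "{0<..<- real L * log 2 \<beta>inf} \<subseteq> ?rates"
  proof
    fix x :: real
    assume "x \<in> {0<..<- real L * log 2 \<beta>inf}"
    then have "achievable L P sb2 0 (x / real L)"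
      using L assms(2-4) fixpoint by (intro achievable_below_log_beta) (auto simp: field_simps)
    then show "x \<in> ?rates"
      using L by (auto intro!: image_eqI[of x _ "x / real L"])
  qed
  moreover have "?rates \<subseteq> {..- real L * log 2 \<beta>inf}"
  proof clarsimp
    fix R
    assume "achievable L P sb2 0 R"
    then have "R < - log 2 \<beta>inf"
      using L by (intro achievable_less_log_beta[OF _ assms(2-5) fixpoint]) simp_all
    then show "real L * R \<le> - (real L * log 2 \<beta>inf)"
      using mult_left_mono[of R "- log 2 \<beta>inf" "real L"] by simp
  qed
  ultimately show ?thesis
    unfolding Csum_def by (rule cSup_eq_of_interval_subset)
qed

end
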